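(* There exist a constant $c>0$ and, for infinitely many $T$, a sequence of multiclass outcomes $\mathbf x\in[K]^T$ and forecasts $\mathbf p\in\Delta_K^T$ (with $K=3$) such that $\mathrm{Reg}_\ell(\mathbf p,\mathbf x)\le0$ for every bounded separable scoring rule $\ell$, but $\mathrm{MaxAgentReg}(\mathbf p,\mathbf x)\ge cT$.
   Context: $\Delta_K$ is the probability simplex in $\mathbb R^K$, outcome $i$ identified with $e_i$. A multiclass scoring rule is $\ell:\Delta_K\times[K]\to\mathbb R$; with $\ell(p;q)=\sum_iq_i\ell(p,i)$ it is proper if $\ell(p;p)\le\ell(p';p)$ for all $p,p'\in\Delta_K$, and bounded if its values lie in $[-1,1]$; $\mathcal L$ is the set of bounded proper multiclass scoring rules. A multiclass scoring rule is separable if $\ell(p,x)=\sum_{i=1}^K\ell_i(p_i,\mathbf 1(x=i))$ for some proper binary scoring rules $\ell_i:[0,1]\times\{0,1\}\to\mathbb R$ (binary properness: $(1-q)\ell_i(q,0)+q\ell_i(q,1)\le(1-q)\ell_i(q',0)+q\ell_i(q',1)$ for all $q,q'\in[0,1]$). With $\beta=\frac1T\sum_te_{x_t}$, $\mathrm{Reg}_\ell(\mathbf p,\mathbf x)=\sum_t\ell(p_t,x_t)-\sum_t\ell(\beta,x_t)$ and $\mathrm{MaxAgentReg}(\mathbf p,\mathbf x)=\sup_{\ell\in\mathcal L}\mathrm{Reg}_\ell(\mathbf p,\mathbf x)$. *)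

theory Defs
  imports Complex_Main
begin

text \<open>Outcomes [K] are 0..K-1; points of the simplex are functions nat => real,
  vanishing outside {..<K} (canonical representation).\<close>

definition simplex :: "nat \<Rightarrow> (nat \<Rightarrow> real) set" where
  "simplex K = {p. (\<forall>i<K. 0 \<le> p i) \<and> (\<forall>i\<ge>K. p i = 0) \<and> (\<Sum>i<K. p i) = 1}"

definition basis_vec :: "nat \<Rightarrow> nat \<Rightarrow> real" where
  "basis_vec i = (\<lambda>j. if j = i then 1 else 0)"

definition exp_loss :: "nat \<Rightarrow> ((nat \<Rightarrow> real) \<Rightarrow> nat \<Rightarrow> real) \<Rightarrow> (nat \<Rightarrow> real) \<Rightarrow> (nat \<Rightarrow> real) \<Rightarrow> real" where
  "exp_loss K l p q = (\<Sum>i<K. q i * l p i)"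

definition proper_rule :: "nat \<Rightarrow> ((nat \<Rightarrow> real) \<Rightarrow> nat \<Rightarrow> real) \<Rightarrow> bool" where
  "proper_rule K l \<longleftrightarrow> (\<forall>p\<in>simplex K. \<forall>p'\<in>simplex K. exp_loss K l p p \<le> exp_loss K l p' p)"

definition bounded_rule :: "nat \<Rightarrow> ((nat \<Rightarrow> real) \<Rightarrow> nat \<Rightarrow> real) \<Rightarrow> bool" where
  "bounded_rule K l \<longleftrightarrow> (\<forall>p\<in>simplex K. \<forall>i<K. -1 \<le> l p i \<and> l p i \<le> 1)"

definition bpsr :: "nat \<Rightarrow> ((nat \<Rightarrow> real) \<Rightarrow> nat \<Rightarrow> real) set" where
  "bpsr K = {l. proper_rule K l \<and> bounded_rule K l}"

text \<open>Binary scoring rule: l q b, with b = True meaning outcome 1.\<close>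
definition binary_proper :: "(real \<Rightarrow> bool \<Rightarrow> real) \<Rightarrow> bool" where
  "binary_proper lb \<longleftrightarrow> (\<forall>q\<in>{0..1}. \<forall>q'\<in>{0..1}.
     (1 - q) * lb q False + q * lb q True \<le> (1 - q) * lb q' False + q * lb q' True)"

definition separable_rule :: "nat \<Rightarrow> ((nat \<Rightarrow> real) \<Rightarrow> nat \<Rightarrow> real) \<Rightarrow> bool" where
  "separable_rule K l \<longleftrightarrow> (\<exists>ls :: nat \<Rightarrow> real \<Rightarrow> bool \<Rightarrow> real.
     (\<forall>i<K. binary_proper (ls i)) \<and>
     (\<forall>p\<in>simplex K. \<forall>x<K. l p x = (\<Sum>i<K. ls i (p i) (x = i))))"

definition empirical :: "nat \<Rightarrow> (nat \<Rightarrow> nat) \<Rightarrow> nat \<Rightarrow> real" where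
  "empirical T x = (\<lambda>i. (\<Sum>t<T. basis_vec (x t) i) / real T)"

definition Reg :: "((nat \<Rightarrow> real) \<Rightarrow> nat \<Rightarrow> real) \<Rightarrow> nat \<Rightarrow> (nat \<Rightarrow> nat \<Rightarrow> real) \<Rightarrow> (nat \<Rightarrow> nat) \<Rightarrow> real" where
  "Reg l T p x = (\<Sum>t<T. l (p t) (x t)) - (\<Sum>t<T. l (empirical T x) (x t))"

definition MaxAgentReg :: "nat \<Rightarrow> nat \<Rightarrow> (nat \<Rightarrow> nat \<Rightarrow> real) \<Rightarrow> (nat \<Rightarrow> nat) \<Rightarrow> real" where
  "MaxAgentReg K T p x = (SUP l\<in>bpsr K. Reg l T p x)"

end

theory Submission
  imports Defs "HOL-Library.Infinite_Set"
begin

text \<open>A separable rule is a sum of binary proper rules, the i-th of which sees only the marginal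
  forecasts p_t(i) and the events x_t = i. If every marginal is calibrated, properness of
  each binary rule on each level set of p_t(i) shows that the forecasts do no worse than the
  constant forecast \<beta>, so no separable rule has positive regret. The forecasts
  (1/2,1/2,0), (1/2,0,1/2), (0,1/2,1/2) with outcomes 0, 2, 1, repeated cyclically, are
  marginally calibrated with \<beta> uniform; but each forecast determines the outcome, and a proper
  rule that best-responds to a menu of four loss vectors charges every round 1/2 and \<beta> nothing,
  giving regret T/2.\<close>

lemma sum_periodic:
  fixes f :: "nat \<Rightarrow> 'a::semiring_1"
  shows "(\<Sum>t<n * m. f (t mod m)) = of_nat n * (\<Sum>r<m. f r)"
proof -
  have block: "(\<Sum>t\<in>{j * m..<j * m + m}. f (t mod m)) = (\<Sum>r<m. f r)" for j
    using sum.atLeastLessThan_shift_bounds[of "\<lambda>t. f (t mod m)" 0 "j * m" m]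
    by (simp add: atLeast0LessThan add.commute)
  have "(\<Sum>t<n * m. f (t mod m)) = (\<Sum>j<n. \<Sum>t\<in>{j * m..<j * m + m}. f (t mod m))"
    by (rule sum.nat_group[symmetric])
  then show ?thesis
    by (simp add: block)
qed

definition menu_rule :: "nat \<Rightarrow> (nat \<Rightarrow> real) set \<Rightarrow> (nat \<Rightarrow> real) \<Rightarrow> nat \<Rightarrow> real" where
  "menu_rule K A p = arg_min_on (\<lambda>a. \<Sum>i<K. p i * a i) A"

lemma menu_rule_in:
  "finite A \<Longrightarrow> A \<noteq> {} \<Longrightarrow> menu_rule K A p \<in> A"
  unfolding menu_rule_def by (rule arg_min_if_finite)

lemma menu_rule_le:
  "finite A \<Longrightarrow> a \<in> A \<Longrightarrow> (\<Sum>i<K. p i * menu_rule K A p i) \<le> (\<Sum>i<K. p i * a i)"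
  unfolding menu_rule_def using arg_min_least[where f = "\<lambda>a. \<Sum>i<K. p i * a i"] by blast

lemma menu_rule_eqI:
  assumes "finite A" "a \<in> A" "\<forall>b\<in>A. b \<noteq> a \<longrightarrow> (\<Sum>i<K. p i * a i) < (\<Sum>i<K. p i * b i)"
  shows "menu_rule K A p = a"
proof (rule ccontr)
  assume "menu_rule K A p \<noteq> a"
  moreover have "menu_rule K A p \<in> A"
    using assms(1,2) by (blast intro: menu_rule_in)
  ultimately show False
    using assms(3) menu_rule_le[OF assms(1,2), where K = K and p = p] by fastforce
qed

lemma proper_menu_rule:
  "finite A \<Longrightarrow> A \<noteq> {} \<Longrightarrow> proper_rule K (menu_rule K A)"
  unfolding proper_rule_def exp_loss_def by (blast intro: menu_rule_le menu_rule_in)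

lemma bounded_menu_rule:
  "finite A \<Longrightarrow> A \<noteq> {} \<Longrightarrow> \<forall>a\<in>A. \<forall>i<K. \<bar>a i\<bar> \<le> 1 \<Longrightarrow> bounded_rule K (menu_rule K A)"
  unfolding bounded_rule_def using menu_rule_in by (metis abs_le_iff minus_le_iff)

lemma simplex_coord_bounds:
  assumes "p \<in> simplex K"
  shows "p i \<in> {0..1}"
proof (cases "i < K")
  case True
  have "p i \<le> (\<Sum>j<K. p j)"
    using assms True by (intro member_le_sum) (auto simp: simplex_def)
  with assms True show ?thesis by (simp add: simplex_def)
next
  case False
  with assms show ?thesis by (simp add: simplex_def)
qed

lemma empirical_in_simplex:
  assumes "0 < T" "\<forall>t<T. x t < K"
  shows "empirical T x \<in> simplex K"
proof -
  have "(\<Sum>i<K. basis_vec (x t) i) = 1" if "t < T" for t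
    using assms(2) that by (simp add: basis_vec_def)
  then have "(\<Sum>i<K. \<Sum>t<T. basis_vec (x t) i) = real T"
    by (subst sum.swap) simp
  moreover have "basis_vec (x t) i = 0" if "t < T" "K \<le> i" for t i
    using assms(2) that by (auto simp: basis_vec_def)
  ultimately show ?thesis
    using assms(1) by (auto simp: simplex_def empirical_def basis_vec_def sum_nonneg
        simp flip: sum_divide_distrib)
qed

lemma Reg_le_of_bounded:
  assumes "bounded_rule K l" "\<forall>t<T. p t \<in> simplex K \<and> x t < K"
  shows "Reg l T p x \<le> 2 * real T"
proof (cases "T = 0")
  case False
  then have "empirical T x \<in> simplex K"
    using assms(2) by (simp add: empirical_in_simplex)
  then have "l (p t) (x t) \<le> 1 \<and> -1 \<le> l (empirical T x) (x t)" if "t < T" for t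
    using assms that unfolding bounded_rule_def by blast
  then have "Reg l T p x \<le> (\<Sum>t<T. 2)"
    unfolding Reg_def sum_subtractf[symmetric] by (intro sum_mono) fastforce
  then show ?thesis by simp
qed (simp add: Reg_def)

lemma Reg_le_MaxAgentReg:
  assumes "l \<in> bpsr K" "\<forall>t<T. p t \<in> simplex K \<and> x t < K"
  shows "Reg l T p x \<le> MaxAgentReg K T p x"
  unfolding MaxAgentReg_def
proof (rule cSUP_upper[OF assms(1)])
  show "bdd_above ((\<lambda>l. Reg l T p x) ` bpsr K)"
    using Reg_le_of_bounded[OF _ assms(2)]
    by (intro bdd_aboveI2[where M = "2 * real T"]) (simp add: bpsr_def)
qed

lemma empirical_repeat:
  assumes "0 < n"
  shows "empirical (n * m) (\<lambda>t. x (t mod m)) = empirical m x"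
proof
  fix i
  show "empirical (n * m) (\<lambda>t. x (t mod m)) i = empirical m x i"
    using assms
    by (simp add: empirical_def sum_periodic[where f = "\<lambda>r. basis_vec (x r) i"])
qed

lemma Reg_repeat:
  assumes "0 < n"
  shows "Reg l (n * m) (\<lambda>t. p (t mod m)) (\<lambda>t. x (t mod m)) = real n * Reg l m p x"
  using assms
  by (simp add: Reg_def empirical_repeat sum_periodic[where f = "\<lambda>r. l (p r) (x r)"]
      sum_periodic[where f = "\<lambda>r. l (empirical m x) (x r)"] right_diff_distrib)

definition marginally_calibrated :: "nat \<Rightarrow> nat \<Rightarrow> (nat \<Rightarrow> nat \<Rightarrow> real) \<Rightarrow> (nat \<Rightarrow> nat) \<Rightarrow> bool" where
  "marginally_calibrated K T p x \<longleftrightarrow>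
     (\<forall>i<K. \<forall>v. (\<Sum>t<T. if p t i = v then of_bool (x t = i) - v else 0) = 0)"

lemma marginally_calibrated_repeat:
  "marginally_calibrated K m p x \<Longrightarrow>
     marginally_calibrated K (n * m) (\<lambda>t. p (t mod m)) (\<lambda>t. x (t mod m))"
  unfolding marginally_calibrated_def
  by (simp add: sum_periodic[where f = "\<lambda>r. if p r _ = _ then of_bool (x r = _) - _ else 0"])

lemma sum_binary_loss_calibrated:
  fixes f :: "real \<Rightarrow> bool \<Rightarrow> real"
  assumes "finite C" "(\<Sum>t\<in>C. of_bool (b t) - v) = 0"
  shows "(\<Sum>t\<in>C. f w (b t)) = card C * ((1 - v) * f w False + v * f w True)"
proof -
  have "f w (b t) = ((1 - v) * f w False + v * f w True) + (of_bool (b t) - v) * (f w True - f w False)"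
    for t by (cases "b t") (simp_all add: algebra_simps)
  then have "(\<Sum>t\<in>C. f w (b t)) = card C * ((1 - v) * f w False + v * f w True)
      + (\<Sum>t\<in>C. of_bool (b t) - v) * (f w True - f w False)"
    by (simp add: sum.distrib sum_distrib_right)
  with assms(2) show ?thesis by simp
qed

lemma binary_proper_calibrated_le:
  fixes f :: "real \<Rightarrow> bool \<Rightarrow> real"
  assumes "binary_proper f" "finite S" "\<forall>t\<in>S. u t \<in> {0..1}" "q \<in> {0..1}"
    and calibrated: "\<And>v. (\<Sum>t\<in>S. if u t = v then of_bool (b t) - v else 0) = 0"
  shows "(\<Sum>t\<in>S. f (u t) (b t)) \<le> (\<Sum>t\<in>S. f q (b t))"
proof -
  let ?C = "\<lambda>v. {t \<in> S. u t = v}"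
  have "(\<Sum>t\<in>S. f (u t) (b t)) = (\<Sum>v\<in>u ` S. \<Sum>t\<in>?C v. f (u t) (b t))"
    by (rule sum.image_gen[OF assms(2)])
  also have "\<dots> = (\<Sum>v\<in>u ` S. \<Sum>t\<in>?C v. f v (b t))"
    by (intro sum.cong) auto
  also have "\<dots> \<le> (\<Sum>v\<in>u ` S. \<Sum>t\<in>?C v. f q (b t))"
  proof (rule sum_mono)
    fix v assume "v \<in> u ` S"
    then have v: "v \<in> {0..1}"
      using assms(3) by blast
    have "(\<Sum>t\<in>?C v. of_bool (b t) - v) = 0"
      using calibrated[of v] assms(2) by (simp add: sum.inter_filter)
    note level_sum = sum_binary_loss_calibrated[OF _ this]
    have "(1 - v) * f v False + v * f v True \<le> (1 - v) * f q False + v * f q True"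
      using assms(1,4) v unfolding binary_proper_def by blast
    then show "(\<Sum>t\<in>?C v. f v (b t)) \<le> (\<Sum>t\<in>?C v. f q (b t))"
      using assms(2) by (simp add: level_sum mult_left_mono)
  qed
  also have "\<dots> = (\<Sum>t\<in>S. f q (b t))"
    by (rule sum.image_gen[OF assms(2), symmetric])
  finally show ?thesis .
qed

lemma Reg_le_zero_if_separable_calibrated:
  assumes "separable_rule K l" "\<forall>t<T. p t \<in> simplex K \<and> x t < K"
    and "marginally_calibrated K T p x"
  shows "Reg l T p x \<le> 0"
proof (cases "T = 0")
  case False
  let ?\<beta> = "empirical T x"
  have "?\<beta> \<in> simplex K"
    using False assms(2) by (simp add: empirical_in_simplex)
  obtain ls where proper: "\<forall>i<K. binary_proper (ls i)"
    and split: "\<forall>p\<in>simplex K. \<forall>y<K. l p y = (\<Sum>i<K. ls i (p i) (y = i))"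
    using assms(1) unfolding separable_rule_def by blast
  have "Reg l T p x = (\<Sum>i<K. (\<Sum>t<T. ls i (p t i) (x t = i)) - (\<Sum>t<T. ls i (?\<beta> i) (x t = i)))"
    using assms(2) split \<open>?\<beta> \<in> simplex K\<close>
    by (simp add: Reg_def sum_subtractf sum.swap[where A = "{..<K}"])
  also have "\<dots> \<le> 0"
  proof (intro sum_nonpos)
    fix i assume "i \<in> {..<K}"
    moreover have "\<forall>t\<in>{..<T}. p t i \<in> {0..1}"
      using assms(2) simplex_coord_bounds by blast
    ultimately show "(\<Sum>t<T. ls i (p t i) (x t = i)) - (\<Sum>t<T. ls i (?\<beta> i) (x t = i)) \<le> 0"
      using binary_proper_calibrated_le[of "ls i" "{..<T}" "\<lambda>t. p t i" "?\<beta> i" "\<lambda>t. x t = i"]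
        proper assms(3) simplex_coord_bounds \<open>?\<beta> \<in> simplex K\<close>
      by (simp add: marginally_calibrated_def)
  qed
  finally show ?thesis .
qed (simp add: Reg_def)

definition vec3 :: "real \<Rightarrow> real \<Rightarrow> real \<Rightarrow> nat \<Rightarrow> real" where
  "vec3 a b c = (\<lambda>j. if j = 0 then a else if j = 1 then b else if j = 2 then c else 0)"

definition cycle_forecast :: "nat \<Rightarrow> nat \<Rightarrow> real" where
  "cycle_forecast t = [vec3 (1/2) (1/2) 0, vec3 (1/2) 0 (1/2), vec3 0 (1/2) (1/2)] ! t"

definition cycle_outcome :: "nat \<Rightarrow> nat" where
  "cycle_outcome t = [0, 2, 1] ! t"

text \<open>At cycle_forecast t the unique best vector of the menu is the (t+1)-st, which charges 1/2 on
  cycle_outcome t; at the uniform distribution the zero vector is the unique best.\<close>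

definition cycle_menu :: "(nat \<Rightarrow> real) set" where
  "cycle_menu = {vec3 0 0 0, vec3 (1/2) (-1) 1, vec3 (-1) 1 (1/2), vec3 1 (1/2) (-1)}"

lemma vec3_apply [simp]:
  "vec3 a b c 0 = a" "vec3 a b c (Suc 0) = b" "vec3 a b c 2 = c"
  by (simp_all add: vec3_def)

lemma lessThan_3: "{..<3::nat} = {0, 1, 2}"
  by auto

lemma cycle_in_simplex: "t < 3 \<Longrightarrow> cycle_forecast t \<in> simplex 3 \<and> cycle_outcome t < 3"
  by (auto simp: less_Suc_eq numeral_3_eq_3 cycle_forecast_def cycle_outcome_def simplex_def vec3_def)

lemma cycle_marginally_calibrated: "marginally_calibrated 3 3 cycle_forecast cycle_outcome"
  by (auto simp: marginally_calibrated_def lessThan_3 cycle_forecast_def cycle_outcome_def vec3_def)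

lemma empirical_cycle: "empirical 3 cycle_outcome = vec3 (1/3) (1/3) (1/3)"
  by (auto simp: fun_eq_iff empirical_def lessThan_3 basis_vec_def cycle_outcome_def vec3_def)

lemma bpsr_cycle_menu: "menu_rule 3 cycle_menu \<in> bpsr 3"
  unfolding bpsr_def cycle_menu_def
  by (auto intro!: proper_menu_rule bounded_menu_rule simp: vec3_def)

lemma Reg_cycle_menu: "Reg (menu_rule 3 cycle_menu) 3 cycle_forecast cycle_outcome = 3/2"
proof -
  have choice:
    "menu_rule 3 cycle_menu (cycle_forecast 0) = vec3 (1/2) (-1) 1"
    "menu_rule 3 cycle_menu (cycle_forecast 1) = vec3 (-1) 1 (1/2)"
    "menu_rule 3 cycle_menu (cycle_forecast 2) = vec3 1 (1/2) (-1)"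
    "menu_rule 3 cycle_menu (vec3 (1/3) (1/3) (1/3)) = vec3 0 0 0"
    by (rule menu_rule_eqI; simp add: cycle_menu_def lessThan_3 cycle_forecast_def vec3_def)+
  show ?thesis
    using choice by (simp add: Reg_def empirical_cycle lessThan_3 cycle_outcome_def)
qed

theorem corollary5p6:
  shows "\<exists>c::real. c > 0 \<and> infinite {T::nat. \<exists>(p :: nat \<Rightarrow> nat \<Rightarrow> real) (x :: nat \<Rightarrow> nat).
           (\<forall>t<T. p t \<in> simplex 3 \<and> x t < 3) \<and>
           (\<forall>l. bounded_rule 3 l \<and> separable_rule 3 l \<longrightarrow> Reg l T p x \<le> 0) \<and>
           MaxAgentReg 3 T p x \<ge> c * real T}"
proof -
  let ?p = "\<lambda>t. cycle_forecast (t mod 3)" and ?x = "\<lambda>t. cycle_outcome (t mod 3)"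
  have repeated_cycle: "\<exists>p x. (\<forall>t<n * 3. p t \<in> simplex 3 \<and> x t < 3) \<and>
      (\<forall>l. bounded_rule 3 l \<and> separable_rule 3 l \<longrightarrow> Reg l (n * 3) p x \<le> 0) \<and>
      MaxAgentReg 3 (n * 3) p x \<ge> 1/2 * real (n * 3)" if "0 < n" for n
  proof (intro exI conjI)
    show in_simplex: "\<forall>t<n * 3. ?p t \<in> simplex 3 \<and> ?x t < 3"
      by (simp add: cycle_in_simplex)
    show "\<forall>l. bounded_rule 3 l \<and> separable_rule 3 l \<longrightarrow> Reg l (n * 3) ?p ?x \<le> 0"
      using in_simplex marginally_calibrated_repeat[OF cycle_marginally_calibrated]
      by (blast intro: Reg_le_zero_if_separable_calibrated)
    have "1/2 * real (n * 3) = Reg (menu_rule 3 cycle_menu) (n * 3) ?p ?x"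
      by (simp add: Reg_repeat[OF that] Reg_cycle_menu)
    also have "\<dots> \<le> MaxAgentReg 3 (n * 3) ?p ?x"
      by (rule Reg_le_MaxAgentReg[OF bpsr_cycle_menu in_simplex])
    finally show "1/2 * real (n * 3) \<le> MaxAgentReg 3 (n * 3) ?p ?x" .
  qed
  have multiples: "infinite (range (\<lambda>n. Suc n * 3))"
    by (rule range_inj_infinite) (simp add: inj_def)
  show ?thesis
    by (intro exI[of _ "1/2"] conjI infinite_super[OF _ multiples] image_subsetI CollectI
        repeated_cycle) simp_all
qed

end
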